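(* Let $t\ge 2$ and let $S=\{s_1,\ldots,s_t\}\subseteq BS(1,3)$ with $s_i=b^{m_i}a^{x_i}$, where $x_1,\dots,x_t\in\mathbb Z$ and $1\le m_1<m_2<\cdots<m_t$ are integers, so $k=|S|=t$. If $S$ is non-abelian, then $|S^2|\geq 4k-4$.
   Context: $BS(1,3)=\langle a,b\mid ab=ba^3\rangle$, in which $(b^m a^x)(b^n a^y)=b^{m+n}a^{y+3^n x}$ for integers $m,n\ge0$ and $x,y\in\mathbb Z$. $S^2=\{st: s,t\in S\}$. A set is non-abelian if the subgroup it generates is non-abelian. *)

theory Defs
  imports Complex_Main "HOL-Algebra.Group" "HOL-Algebra.Generated_Groups"
begin

text \<open>The Baumslag--Solitar group BS(1,3) = <a,b | ab = ba^3>, realised as the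
  semidirect product Z[1/3] x| Z: the pair (m, x) stands for b^m a^x, with
  m an integer and x in Z[1/3] (stored as a rational).  Multiplication:
  (b^m a^x)(b^n a^y) = b^(m+n) a^(y + 3^n x).\<close>

definition Z3 :: "rat set" where
  "Z3 = {q. \<exists>(k::nat) (z::int). q = of_int z / 3 ^ k}"

definition bs_mult :: "int \<times> rat \<Rightarrow> int \<times> rat \<Rightarrow> int \<times> rat" where
  "bs_mult g h = (fst g + fst h, snd h + (3::rat) powi (fst h) * snd g)"

definition BS13 :: "(int \<times> rat) monoid" where
  "BS13 = \<lparr> carrier = {g. snd g \<in> Z3}, mult = bs_mult, one = (0, 0) \<rparr>"

definition bs_elem :: "int \<Rightarrow> int \<Rightarrow> int \<times> rat" where
  "bs_elem m x = (m, of_int x)"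

definition non_abelian :: "(int \<times> rat) set \<Rightarrow> bool" where
  "non_abelian S \<longleftrightarrow> (\<exists>g\<in>generate BS13 S. \<exists>h\<in>generate BS13 S. g \<otimes>\<^bsub>BS13\<^esub> h \<noteq> h \<otimes>\<^bsub>BS13\<^esub> g)"

definition setsq :: "(int \<times> rat) set \<Rightarrow> (int \<times> rat) set" where
  "setsq S = {bs_mult s t | s t. s \<in> S \<and> t \<in> S}"

end

theory Submission
  imports Defs
begin

text \<open>Let b^m a^x act on the rationals by the affine map z \<mapsto> 3^m z + x, so that a product
  g h acts as g followed by h.  For m \<ge> 1 this map has a unique fixed point; two such
  elements commute iff their fixed points agree, and the fixed point of g h is a strict convex
  combination of those of g and h.  Elements fixing a common point form an abelian stabiliser,
  so a non-abelian S contains two elements with different fixed points.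

  The bound follows by induction, adjoining to S the element u of largest level m.  If S is
  non-abelian, then u u, the products of u with the top element v of S, and a product of u with
  one lower element (the second element of S, or the highest element of S whose fixed point
  differs from that of u) give four elements of the new square outside S^2: they lie above
  every level of S^2, or have a fixed point that no element of S^2 at that level can have.
  If all of S fixes one point c, then u u, u S and S u give 2|S| + 1 new elements, none of
  which fixes c, and |S^2| \<ge> 2|S| - 1 completes the count.\<close>

lemma fst_bs_mult [simp]: "fst (bs_mult g h) = fst g + fst h"
  by (simp add: bs_mult_def)

lemma snd_bs_mult [simp]: "snd (bs_mult g h) = snd h + 3 powi fst h * snd g"
  by (simp add: bs_mult_def)

lemma inj_bs_mult_left: "inj (bs_mult a)"
  by (rule injI) (auto simp: prod_eq_iff)

lemma inj_bs_mult_right: "inj (\<lambda>g. bs_mult g a)"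
  by (rule injI) (simp add: prod_eq_iff)

text \<open>bs_fixpoint g is the fixed point of z \<mapsto> 3^m z + x for g = (m, x) (a junk value when
  m = 0), and bs_stabiliser c consists of the elements whose map fixes c.\<close>

definition bs_fixpoint :: "int \<times> rat \<Rightarrow> rat" where
  "bs_fixpoint g = snd g / (1 - 3 powi fst g)"

definition bs_stabiliser :: "rat \<Rightarrow> (int \<times> rat) set" where
  "bs_stabiliser c = {g. snd g = c * (1 - 3 powi fst g)}"

lemma three_powi_gt_1: "1 \<le> k \<Longrightarrow> (1::rat) < 3 powi k"
  by (simp add: one_less_power_int)

lemma bs_mult_commute_iff_fixpoint:
  assumes "1 \<le> fst g" "1 \<le> fst h"
  shows "bs_mult g h = bs_mult h g \<longleftrightarrow> bs_fixpoint g = bs_fixpoint h"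
proof -
  have "(1::rat) < 3 powi fst g" "(1::rat) < 3 powi fst h"
    using assms by (simp_all add: three_powi_gt_1)
  have "bs_mult g h = bs_mult h g \<longleftrightarrow>
      snd h + 3 powi fst h * snd g = snd g + 3 powi fst g * snd h"
    by (simp add: prod_eq_iff)
  also have "\<dots> \<longleftrightarrow> snd g * (1 - 3 powi fst h) = snd h * (1 - 3 powi fst g)"
    by (auto simp: algebra_simps)
  also have "\<dots> \<longleftrightarrow> bs_fixpoint g = bs_fixpoint h"
    using \<open>1 < 3 powi fst g\<close> \<open>1 < 3 powi fst h\<close> by (simp add: bs_fixpoint_def frac_eq_eq)
  finally show ?thesis .
qed

lemma bs_fixpoint_mult_convex:
  assumes "1 \<le> fst g" "1 \<le> fst h"
  obtains l where "0 < l" "l < 1"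
    "bs_fixpoint (bs_mult g h) = l * bs_fixpoint g + (1 - l) * bs_fixpoint h"
proof
  define P Q a b where "P = (3::rat) powi fst g" and "Q = (3::rat) powi fst h"
    and "a = bs_fixpoint g" and "b = bs_fixpoint h"
  have "1 < P" "1 < Q"
    using assms by (simp_all add: P_def Q_def three_powi_gt_1)
  then have "1 < P * Q" "0 < Q * (P - 1)" "Q * (P - 1) < P * Q - 1"
    by (simp_all add: less_1_mult algebra_simps)
  then show "0 < Q * (P - 1) / (P * Q - 1)" "Q * (P - 1) / (P * Q - 1) < 1"
    by simp_all
  have sg: "snd g = (1 - P) * a" and sh: "snd h = (1 - Q) * b"
    using \<open>1 < P\<close> \<open>1 < Q\<close> by (simp_all add: a_def b_def P_def Q_def bs_fixpoint_def)
  have "1 - Q * (P - 1) / (P * Q - 1) = (Q - 1) / (P * Q - 1)"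
    using \<open>1 < P * Q\<close> by (simp add: field_simps)
  have "bs_fixpoint (bs_mult g h) = (snd h + Q * snd g) / (1 - P * Q)"
    by (simp add: bs_fixpoint_def power_int_add P_def Q_def)
  also have "\<dots> = - ((1 - Q) * b + Q * ((1 - P) * a)) / - (1 - P * Q)"
    by (simp only: sg sh minus_divide_divide)
  also have "\<dots> = (Q * (P - 1) * a + (Q - 1) * b) / (P * Q - 1)"
    by (rule arg_cong2[where f = "(/)"]) (simp_all add: algebra_simps)
  also have "\<dots> = Q * (P - 1) / (P * Q - 1) * a + (1 - Q * (P - 1) / (P * Q - 1)) * b"
    using \<open>1 - Q * (P - 1) / (P * Q - 1) = (Q - 1) / (P * Q - 1)\<close>
    by (simp add: add_divide_distrib)
  finally show "bs_fixpoint (bs_mult g h) = Q * (P - 1) / (P * Q - 1) * bs_fixpoint g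
      + (1 - Q * (P - 1) / (P * Q - 1)) * bs_fixpoint h"
    by (simp add: a_def b_def)
qed

lemma bs_fixpoint_mult_eq:
  assumes "1 \<le> fst g" "1 \<le> fst h" "bs_fixpoint g = bs_fixpoint h"
  shows "bs_fixpoint (bs_mult g h) = bs_fixpoint g"
proof -
  obtain l where "bs_fixpoint (bs_mult g h) = l * bs_fixpoint g + (1 - l) * bs_fixpoint h"
    using bs_fixpoint_mult_convex[OF assms(1,2)] .
  then show ?thesis
    using assms(3) by (simp add: algebra_simps)
qed

lemma bs_fixpoint_mult_neq:
  assumes "1 \<le> fst g" "1 \<le> fst h" "bs_fixpoint g \<noteq> bs_fixpoint h"
  shows "bs_fixpoint (bs_mult g h) \<noteq> bs_fixpoint g" "bs_fixpoint (bs_mult g h) \<noteq> bs_fixpoint h"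
proof -
  obtain l where l: "0 < l" "l < 1"
    and fix_gh: "bs_fixpoint (bs_mult g h) = l * bs_fixpoint g + (1 - l) * bs_fixpoint h"
    using bs_fixpoint_mult_convex[OF assms(1,2)] .
  have "bs_fixpoint (bs_mult g h) - bs_fixpoint g = (1 - l) * (bs_fixpoint h - bs_fixpoint g)"
    "bs_fixpoint (bs_mult g h) - bs_fixpoint h = l * (bs_fixpoint g - bs_fixpoint h)"
    by (simp_all add: fix_gh algebra_simps)
  then show "bs_fixpoint (bs_mult g h) \<noteq> bs_fixpoint g" "bs_fixpoint (bs_mult g h) \<noteq> bs_fixpoint h"
    using l assms(3) by auto
qed

lemma bs_mult_mem_stabiliser:
  assumes "g \<in> bs_stabiliser c" "h \<in> bs_stabiliser c"
  shows "bs_mult g h \<in> bs_stabiliser c"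
proof -
  have g: "snd g = c * (1 - 3 powi fst g)" and h: "snd h = c * (1 - 3 powi fst h)"
    using assms by (simp_all add: bs_stabiliser_def)
  show ?thesis
    unfolding bs_stabiliser_def mem_Collect_eq snd_bs_mult fst_bs_mult g h
    by (simp add: power_int_add algebra_simps)
qed

lemma bs_stabiliser_commute:
  assumes "g \<in> bs_stabiliser c" "h \<in> bs_stabiliser c"
  shows "bs_mult g h = bs_mult h g"
proof -
  have g: "snd g = c * (1 - 3 powi fst g)" and h: "snd h = c * (1 - 3 powi fst h)"
    using assms by (simp_all add: bs_stabiliser_def)
  show ?thesis
    unfolding prod_eq_iff fst_bs_mult snd_bs_mult g h by (simp add: algebra_simps)
qed

lemma mem_bs_stabiliser_iff:
  "1 \<le> fst g \<Longrightarrow> g \<in> bs_stabiliser c \<longleftrightarrow> bs_fixpoint g = c"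
  using three_powi_gt_1[of "fst g"]
  by (auto simp: bs_stabiliser_def bs_fixpoint_def)

lemma inv_BS13_bs_elem:
  "inv\<^bsub>BS13\<^esub> (bs_elem (int n) x) = (- int n, - of_int x / 3 ^ n)"
  unfolding m_inv_def
proof (rule the_equality)
  have "(- int n, - of_int x / 3 ^ n) \<in> carrier BS13"
    unfolding BS13_def Z3_def by (auto intro!: exI[of _ n] exI[of _ "-x"])
  then show "(- int n, - of_int x / 3 ^ n) \<in> carrier BS13 \<and>
      bs_elem (int n) x \<otimes>\<^bsub>BS13\<^esub> (- int n, - of_int x / 3 ^ n) = \<one>\<^bsub>BS13\<^esub> \<and>
      (- int n, - of_int x / 3 ^ n) \<otimes>\<^bsub>BS13\<^esub> bs_elem (int n) x = \<one>\<^bsub>BS13\<^esub>"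
    by (simp add: BS13_def bs_elem_def bs_mult_def power_int_minus field_simps)
next
  fix y
  assume "y \<in> carrier BS13 \<and> bs_elem (int n) x \<otimes>\<^bsub>BS13\<^esub> y = \<one>\<^bsub>BS13\<^esub> \<and>
      y \<otimes>\<^bsub>BS13\<^esub> bs_elem (int n) x = \<one>\<^bsub>BS13\<^esub>"
  then have "bs_mult (int n, of_int x) y = (0, 0)"
    by (simp add: BS13_def bs_elem_def)
  then have "fst y = - int n" "snd y + 3 powi fst y * of_int x = 0"
    by (simp_all add: prod_eq_iff)
  then show "y = (- int n, - of_int x / 3 ^ n)"
    by (simp add: prod_eq_iff power_int_minus field_simps)
qed

lemma generate_subset_bs_stabiliser:
  assumes elems: "\<And>s. s \<in> S \<Longrightarrow> \<exists>n x. s = bs_elem (int n) x"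
    and "S \<subseteq> bs_stabiliser c"
  shows "generate BS13 S \<subseteq> bs_stabiliser c"
proof
  fix g
  assume "g \<in> generate BS13 S"
  then show "g \<in> bs_stabiliser c"
  proof induction
    case one
    show ?case by (simp add: BS13_def bs_stabiliser_def)
  next
    case (incl h)
    then show ?case using \<open>S \<subseteq> bs_stabiliser c\<close> by blast
  next
    case (inv h)
    then obtain n x where h: "h = bs_elem (int n) x" using elems by blast
    then have "of_int x = c * (1 - 3 ^ n)"
      using inv \<open>S \<subseteq> bs_stabiliser c\<close> by (auto simp: bs_stabiliser_def bs_elem_def)
    then show ?case
      by (simp add: h inv_BS13_bs_elem bs_stabiliser_def power_int_minus field_simps)
  next
    case (eng h1 h2)
    then show ?case by (simp add: BS13_def bs_mult_mem_stabiliser)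
  qed
qed

lemma non_abelian_obtains_distinct_fixpoints:
  assumes elems: "\<And>s. s \<in> S \<Longrightarrow> \<exists>n x. 1 \<le> n \<and> s = bs_elem (int n) x"
    and "non_abelian S"
  obtains g h where "g \<in> S" "h \<in> S" "bs_fixpoint g \<noteq> bs_fixpoint h"
proof (rule ccontr)
  assume "\<not> thesis"
  with that have "\<exists>c. \<forall>s\<in>S. bs_fixpoint s = c"
    by (cases "S = {}") blast+
  then obtain c where c: "\<forall>s\<in>S. bs_fixpoint s = c" ..
  have "S \<subseteq> bs_stabiliser c"
    using elems c by (force simp: mem_bs_stabiliser_iff bs_elem_def)
  moreover have "\<exists>n x. s = bs_elem (int n) x" if "s \<in> S" for s
    using elems that by blast
  ultimately have "generate BS13 S \<subseteq> bs_stabiliser c"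
    using generate_subset_bs_stabiliser by blast
  then show False
    using \<open>non_abelian S\<close> bs_stabiliser_commute
    by (force simp: non_abelian_def BS13_def)
qed

lemma bs_mult_mem_setsq [intro]: "a \<in> S \<Longrightarrow> b \<in> S \<Longrightarrow> bs_mult a b \<in> setsq S"
  unfolding setsq_def by blast

lemma setsqE:
  assumes "z \<in> setsq S"
  obtains a b where "a \<in> S" "b \<in> S" "z = bs_mult a b"
  using assms unfolding setsq_def by blast

lemma finite_setsq:
  assumes "finite S"
  shows "finite (setsq S)"
proof -
  have "setsq S = (\<lambda>(a, b). bs_mult a b) ` (S \<times> S)"
    unfolding setsq_def by auto
  then show ?thesis
    using assms by simp
qed

lemma setsq_mono: "A \<subseteq> B \<Longrightarrow> setsq A \<subseteq> setsq B"
  unfolding setsq_def by blast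

lemma card_setsq_add_disjoint:
  assumes "finite S" "S' \<subseteq> S" "D \<subseteq> setsq S" "D \<inter> setsq S' = {}"
  shows "card (setsq S') + card D \<le> card (setsq S)"
proof -
  have fin: "finite (setsq S)"
    using assms(1) by (rule finite_setsq)
  have "setsq S' \<subseteq> setsq S"
    using assms(2) by (rule setsq_mono)
  then have "finite (setsq S')"
    using fin by (rule finite_subset)
  moreover have "finite D"
    using assms(3) fin by (rule finite_subset)
  ultimately have "card (setsq S') + card D = card (setsq S' \<union> D)"
    using assms(4) by (simp add: card_Un_disjoint Int_commute)
  also have "\<dots> \<le> card (setsq S)"
    using \<open>setsq S' \<subseteq> setsq S\<close> assms(3) fin by (intro card_mono) auto
  finally show ?thesis .
qed

lemma notin_setsq_if_level_gt:
  assumes "\<And>p. p \<in> S \<Longrightarrow> fst p \<le> k" "2 * k < fst z"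
  shows "z \<notin> setsq S"
proof
  assume "z \<in> setsq S"
  then obtain a b where "a \<in> S" "b \<in> S" "z = bs_mult a b"
    by (rule setsqE)
  then show False
    using assms(1)[of a] assms(1)[of b] assms(2) by simp
qed

lemma obtain_inj_on_strict_max:
  fixes f :: "'a \<Rightarrow> 'b::linorder"
  assumes "finite A" "A \<noteq> {}" "inj_on f A"
  obtains v where "v \<in> A" "\<And>p. p \<in> A \<Longrightarrow> p \<noteq> v \<Longrightarrow> f p < f v"
proof -
  have "Max (f ` A) \<in> f ` A"
    using assms(1,2) by simp
  then obtain v where v: "v \<in> A" "f v = Max (f ` A)"
    by (metis imageE)
  have "f p < f v" if "p \<in> A" "p \<noteq> v" for p
  proof -
    have "f p \<le> f v"
      using v that(1) assms(1) by simp
    moreover have "f p \<noteq> f v"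
      using inj_onD[OF assms(3) _ that(1) v(1)] that(2) by blast
    ultimately show ?thesis
      by simp
  qed
  with v(1) show thesis by (rule that)
qed

lemma card_setsq_ge:
  assumes "finite S" "S \<noteq> {}" "inj_on fst S"
  shows "2 * card S - 1 \<le> card (setsq S)"
proof -
  have "Min (fst ` S) \<in> fst ` S" "Max (fst ` S) \<in> fst ` S"
    using assms(1,2) by simp_all
  then obtain a b where "a \<in> S" "fst a = Min (fst ` S)" "b \<in> S" "fst b = Max (fst ` S)"
    by (metis imageE)
  then have a: "a \<in> S" "\<And>p. p \<in> S \<Longrightarrow> fst a \<le> fst p"
    and b: "b \<in> S" "\<And>p. p \<in> S \<Longrightarrow> fst p \<le> fst b"
    using assms(1) by simp_all
  define X Y where "X = bs_mult a ` S" and "Y = (\<lambda>p. bs_mult p b) ` S"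
  have card_XY: "card X = card S" "card Y = card S"
    unfolding X_def Y_def
    by (simp_all add: card_image inj_on_subset[OF inj_bs_mult_left] inj_on_subset[OF inj_bs_mult_right])
  have "X \<inter> Y \<subseteq> {bs_mult a b}"
  proof
    fix z
    assume "z \<in> X \<inter> Y"
    then obtain p q where pq: "p \<in> S" "q \<in> S" "z = bs_mult a p" "z = bs_mult q b"
      unfolding X_def Y_def by blast
    then have "fst a + fst p = fst q + fst b"
      by (metis fst_bs_mult)
    then have "fst p = fst b"
      using a(2)[OF pq(2)] b(2)[OF pq(1)] by linarith
    then show "z \<in> {bs_mult a b}"
      using inj_onD[OF assms(3) _ pq(1) b(1)] pq(3) by simp
  qed
  then have "card (X \<inter> Y) \<le> 1"
    using card_mono[of "{bs_mult a b}"] by fastforce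
  moreover have "finite X" "finite Y"
    unfolding X_def Y_def using assms(1) by simp_all
  moreover have "card (X \<union> Y) \<le> card (setsq S)"
    using a(1) b(1) finite_setsq[OF assms(1)] by (intro card_mono) (auto simp: X_def Y_def)
  ultimately show ?thesis
    using card_Un_Int[of X Y] card_XY by linarith
qed

context
  fixes S :: "(int \<times> rat) set" and u :: "int \<times> rat"
  assumes finite_S: "finite S"
    and level_u_pos: "1 \<le> fst u"
    and levels_pos: "\<And>p. p \<in> S \<Longrightarrow> 1 \<le> fst p"
    and inj_level: "inj_on fst S"
    and below_u: "\<And>p. p \<in> S \<Longrightarrow> fst p < fst u"
begin

lemma setsq_factors_above:
  assumes "z \<in> setsq S" "fst z = fst u + k"
  obtains p q where "p \<in> S" "q \<in> S" "z = bs_mult p q" "k < fst p" "k < fst q"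
proof -
  obtain p q where pq: "p \<in> S" "q \<in> S" "z = bs_mult p q"
    using assms(1) by (rule setsqE)
  moreover have "k < fst p" "k < fst q"
    using assms(2) pq below_u[of p] below_u[of q] by simp_all
  ultimately show thesis
    by (rule that)
qed

lemma card_setsq_insert_top_if_common_fixpoint:
  assumes "S \<noteq> {}" "\<And>p. p \<in> S \<Longrightarrow> bs_fixpoint p = c" "bs_fixpoint u \<noteq> c"
  shows "4 * card S \<le> card (setsq (insert u S))"
proof -
  define X Y where "X = bs_mult u ` S" and "Y = (\<lambda>p. bs_mult p u) ` S"
  define D where "D = insert (bs_mult u u) (X \<union> Y)"
  have "X \<inter> Y = {}"
  proof (rule ccontr)
    assume "X \<inter> Y \<noteq> {}"
    then obtain p q where pq: "p \<in> S" "q \<in> S" "bs_mult u p = bs_mult q u"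
      unfolding X_def Y_def by blast
    then have "fst p = fst q"
      by (metis add.commute add_left_cancel fst_bs_mult)
    then have "bs_mult u p = bs_mult p u"
      using inj_onD[OF inj_level _ pq(1,2)] pq(3) by simp
    then show False
      using bs_mult_commute_iff_fixpoint level_u_pos levels_pos pq(1) assms(2,3) by metis
  qed
  moreover have "bs_mult u u \<notin> X \<union> Y"
  proof -
    have "bs_mult u u \<noteq> bs_mult u p" "bs_mult u u \<noteq> bs_mult p u" if "p \<in> S" for p
      using below_u[OF that] by (auto dest: arg_cong[where f = fst])
    then show ?thesis
      unfolding X_def Y_def by blast
  qed
  moreover have "card X = card S" "card Y = card S" "finite X" "finite Y"
    unfolding X_def Y_def using finite_S
    by (simp_all add: card_image inj_on_subset[OF inj_bs_mult_left] inj_on_subset[OF inj_bs_mult_right])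
  ultimately have card_D: "card D = 2 * card S + 1"
    unfolding D_def by (simp add: card_Un_disjoint)
  have "bs_fixpoint z = c" if z: "z \<in> setsq S" for z
  proof -
    obtain p q where "p \<in> S" "q \<in> S" "z = bs_mult p q"
      using z by (rule setsqE)
    then show ?thesis
      using bs_fixpoint_mult_eq[of p q] levels_pos assms(2) by simp
  qed
  moreover have "bs_fixpoint z \<noteq> c" if "z \<in> D" for z
  proof -
    have "bs_fixpoint (bs_mult u u) \<noteq> c"
      using bs_fixpoint_mult_eq[of u u] level_u_pos assms(3) by simp
    moreover have "bs_fixpoint (bs_mult u p) \<noteq> c" "bs_fixpoint (bs_mult p u) \<noteq> c" if "p \<in> S" for p
      using bs_fixpoint_mult_neq[of u p] bs_fixpoint_mult_neq[of p u] level_u_pos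
        levels_pos[OF that] assms(2)[OF that] assms(3) by auto
    ultimately show ?thesis
      using \<open>z \<in> D\<close> unfolding D_def X_def Y_def by blast
  qed
  ultimately have "D \<inter> setsq S = {}"
    by blast
  moreover have "D \<subseteq> setsq (insert u S)"
    unfolding D_def X_def Y_def by blast
  ultimately have "card (setsq S) + card D \<le> card (setsq (insert u S))"
    using finite_S by (intro card_setsq_add_disjoint) auto
  moreover have "2 * card S - 1 \<le> card (setsq S)"
    using card_setsq_ge finite_S assms(1) inj_level by blast
  moreover have "1 \<le> card S"
    using finite_S assms(1) by (simp add: Suc_le_eq card_gt_0_iff)
  ultimately show ?thesis
    using card_D by linarith
qed

lemma top_products_notin_setsq:
  assumes "v \<in> S" "\<And>p. p \<in> S \<Longrightarrow> p \<noteq> v \<Longrightarrow> fst p < fst v"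
  shows "bs_mult u u \<notin> setsq S" "bs_mult u v \<notin> setsq S" "bs_mult v u \<notin> setsq S"
proof -
  have "fst p \<le> fst v" if "p \<in> S" for p
    using assms(2)[OF that] by (cases "p = v") auto
  moreover have "fst v < fst u"
    using assms(1) below_u by blast
  ultimately show "bs_mult u u \<notin> setsq S" "bs_mult u v \<notin> setsq S" "bs_mult v u \<notin> setsq S"
    using notin_setsq_if_level_gt[of S "fst v"] by simp_all
qed

lemma card_setsq_insert_top_if_top_fixpoints_differ:
  assumes v: "v \<in> S" "\<And>p. p \<in> S \<Longrightarrow> p \<noteq> v \<Longrightarrow> fst p < fst v"
    and "bs_fixpoint u \<noteq> bs_fixpoint v" and "S - {v} \<noteq> {}"
  shows "card (setsq S) + 4 \<le> card (setsq (insert u S))"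
proof -
  obtain w where w: "w \<in> S - {v}" "\<And>p. p \<in> S - {v} \<Longrightarrow> p \<noteq> w \<Longrightarrow> fst p < fst w"
    using obtain_inj_on_strict_max[of "S - {v}" fst] finite_S assms(4) inj_level
    by (metis finite_Diff inj_on_diff)
  have "fst w < fst v" "fst v < fst u"
    using w(1) v below_u by auto
  have only_vv: "z = bs_mult v v" if "z \<in> setsq S" "fst z = fst u + fst w" for z
  proof -
    have "p = v" if "p \<in> S" "fst w < fst p" for p
      using that w by (metis DiffI order_less_asym singletonD)
    then show ?thesis
      using setsq_factors_above[OF that] by metis
  qed
  obtain z where z: "z \<in> {bs_mult u w, bs_mult w u}" "z \<notin> setsq S"
  proof (cases "bs_mult u w \<in> setsq S \<and> bs_mult w u \<in> setsq S")
    case True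
    then have uw: "bs_mult u w = bs_mult v v" and "bs_mult w u = bs_mult v v"
      using only_vv by (metis fst_bs_mult, metis add.commute fst_bs_mult)
    have "1 \<le> fst v" "1 \<le> fst w"
      using v(1) w(1) levels_pos by auto
    have "bs_fixpoint u = bs_fixpoint w"
      using uw \<open>bs_mult w u = bs_mult v v\<close> bs_mult_commute_iff_fixpoint level_u_pos \<open>1 \<le> fst w\<close>
      by metis
    then have "bs_fixpoint (bs_mult u w) = bs_fixpoint u"
      using bs_fixpoint_mult_eq level_u_pos \<open>1 \<le> fst w\<close> by blast
    moreover have "bs_fixpoint (bs_mult v v) = bs_fixpoint v"
      using bs_fixpoint_mult_eq \<open>1 \<le> fst v\<close> by blast
    ultimately show ?thesis
      using assms(3) uw by simp
  next
    case False
    then show ?thesis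
      using that by blast
  qed
  define D where "D = {bs_mult u u, bs_mult u v, bs_mult v u, z}"
  have "fst z = fst u + fst w"
    using z(1) by auto
  moreover have "bs_mult u v \<noteq> bs_mult v u"
    using bs_mult_commute_iff_fixpoint level_u_pos levels_pos v(1) assms(3) by metis
  ultimately have "bs_mult u u \<notin> {bs_mult u v, bs_mult v u, z}"
    "bs_mult u v \<notin> {bs_mult v u, z}" "bs_mult v u \<noteq> z"
    using \<open>fst w < fst v\<close> \<open>fst v < fst u\<close> by (auto dest: arg_cong[where f = fst])
  then have "card D = 4"
    unfolding D_def by simp
  moreover have "D \<subseteq> setsq (insert u S)"
    unfolding D_def using z(1) v(1) w(1) by auto
  moreover have "D \<inter> setsq S = {}"
    unfolding D_def using z(2) top_products_notin_setsq[OF v] by blast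
  ultimately show ?thesis
    using card_setsq_add_disjoint[of "insert u S" S D] finite_S by auto
qed

lemma card_setsq_insert_top_if_top_fixpoints_equal:
  assumes v: "v \<in> S" "\<And>p. p \<in> S \<Longrightarrow> p \<noteq> v \<Longrightarrow> fst p < fst v"
    and "bs_fixpoint u = bs_fixpoint v" and "g \<in> S" "bs_fixpoint g \<noteq> bs_fixpoint u"
  shows "card (setsq S) + 4 \<le> card (setsq (insert u S))"
proof -
  define J where "J = {p \<in> S. bs_fixpoint p \<noteq> bs_fixpoint u}"
  have "g \<in> J"
    unfolding J_def using assms(4,5) by simp
  moreover have "finite J" "inj_on fst J"
    unfolding J_def using finite_S inj_on_subset[OF inj_level] by auto
  ultimately obtain j where j: "j \<in> J" "\<And>p. p \<in> J \<Longrightarrow> p \<noteq> j \<Longrightarrow> fst p < fst j"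
    using obtain_inj_on_strict_max[of J fst] by blast
  have "j \<in> S" "bs_fixpoint j \<noteq> bs_fixpoint u" "1 \<le> fst j"
    using j(1) levels_pos unfolding J_def by auto
  have "fst j < fst v" "fst v < fst u"
    using v \<open>j \<in> S\<close> \<open>bs_fixpoint j \<noteq> bs_fixpoint u\<close> assms(3) below_u by metis+
  have fixpoint_above_j: "bs_fixpoint p = bs_fixpoint u" if "p \<in> S" "fst j < fst p" for p
    using that j unfolding J_def by (metis (mono_tags, lifting) mem_Collect_eq order_less_asym)
  have "bs_fixpoint z = bs_fixpoint u" if z: "z \<in> setsq S" "fst z = fst u + fst j" for z
  proof -
    obtain p q where "p \<in> S" "q \<in> S" "z = bs_mult p q" "fst j < fst p" "fst j < fst q"
      using setsq_factors_above[OF z] .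
    then show ?thesis
      using fixpoint_above_j levels_pos bs_fixpoint_mult_eq by metis
  qed
  moreover have "bs_fixpoint (bs_mult u j) \<noteq> bs_fixpoint u" "bs_fixpoint (bs_mult j u) \<noteq> bs_fixpoint u"
    using bs_fixpoint_mult_neq level_u_pos \<open>1 \<le> fst j\<close> \<open>bs_fixpoint j \<noteq> bs_fixpoint u\<close>
    by metis+
  ultimately have new: "bs_mult u j \<notin> setsq S" "bs_mult j u \<notin> setsq S"
    by (metis fst_bs_mult, metis add.commute fst_bs_mult)
  define D where "D = {bs_mult u u, bs_mult u v, bs_mult u j, bs_mult j u}"
  have "bs_mult u j \<noteq> bs_mult j u"
    using bs_mult_commute_iff_fixpoint level_u_pos \<open>1 \<le> fst j\<close> \<open>bs_fixpoint j \<noteq> bs_fixpoint u\<close>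
    by metis
  then have "bs_mult u u \<notin> {bs_mult u v, bs_mult u j, bs_mult j u}"
    "bs_mult u v \<notin> {bs_mult u j, bs_mult j u}" "bs_mult u j \<noteq> bs_mult j u"
    using \<open>fst j < fst v\<close> \<open>fst v < fst u\<close> by (auto dest: arg_cong[where f = fst])
  then have "card D = 4"
    unfolding D_def by simp
  moreover have "D \<subseteq> setsq (insert u S)"
    unfolding D_def using v(1) \<open>j \<in> S\<close> by auto
  moreover have "D \<inter> setsq S = {}"
    unfolding D_def using new top_products_notin_setsq[OF v] by blast
  ultimately show ?thesis
    using card_setsq_add_disjoint[of "insert u S" S D] finite_S by auto
qed

lemma card_setsq_insert_top_if_distinct_fixpoints:
  assumes "g \<in> S" "h \<in> S" "bs_fixpoint g \<noteq> bs_fixpoint h"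
  shows "card (setsq S) + 4 \<le> card (setsq (insert u S))"
proof -
  obtain v where v: "v \<in> S" "\<And>p. p \<in> S \<Longrightarrow> p \<noteq> v \<Longrightarrow> fst p < fst v"
    using obtain_inj_on_strict_max[OF finite_S _ inj_level] assms(1) by blast
  show ?thesis
  proof (cases "bs_fixpoint u = bs_fixpoint v")
    case True
    then show ?thesis
      using card_setsq_insert_top_if_top_fixpoints_equal[OF v True] assms by metis
  next
    case False
    moreover have "S - {v} \<noteq> {}"
      using assms by blast
    ultimately show ?thesis
      using card_setsq_insert_top_if_top_fixpoints_differ[OF v] by blast
  qed
qed

lemma card_setsq_insert_top_ge:
  assumes IH: "\<And>g h. g \<in> S \<Longrightarrow> h \<in> S \<Longrightarrow> bs_fixpoint g \<noteq> bs_fixpoint h \<Longrightarrow>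
      4 * card S - 4 \<le> card (setsq S)"
    and "g \<in> insert u S" "h \<in> insert u S" "bs_fixpoint g \<noteq> bs_fixpoint h"
  shows "4 * card (insert u S) - 4 \<le> card (setsq (insert u S))"
proof -
  have "u \<notin> S"
    using below_u by blast
  then have card_insert: "card (insert u S) = card S + 1"
    using finite_S by simp
  show ?thesis
  proof (cases "\<exists>g\<in>S. \<exists>h\<in>S. bs_fixpoint g \<noteq> bs_fixpoint h")
    case True
    then obtain g' h' where gh': "g' \<in> S" "h' \<in> S" "bs_fixpoint g' \<noteq> bs_fixpoint h'"
      by blast
    then have "g' \<noteq> h'" "{g', h'} \<subseteq> S"
      by auto
    then have "2 \<le> card S"
      using card_mono[OF finite_S, of "{g', h'}"] by simp
    moreover have "4 * card S - 4 \<le> card (setsq S)"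
      using IH[OF gh'] .
    moreover have "card (setsq S) + 4 \<le> card (setsq (insert u S))"
      using card_setsq_insert_top_if_distinct_fixpoints[OF gh'] .
    ultimately show ?thesis
      using card_insert by linarith
  next
    case False
    have "S \<noteq> {}"
      using assms(2-4) by auto
    then obtain s where "s \<in> S"
      by blast
    then have common: "\<And>p. p \<in> S \<Longrightarrow> bs_fixpoint p = bs_fixpoint s"
      using False by blast
    have "bs_fixpoint u \<noteq> bs_fixpoint s"
    proof
      assume "bs_fixpoint u = bs_fixpoint s"
      then have "bs_fixpoint p = bs_fixpoint s" if "p \<in> insert u S" for p
        using common that by blast
      then show False
        using assms(2-4) by metis
    qed
    then have "4 * card S \<le> card (setsq (insert u S))"
      using card_setsq_insert_top_if_common_fixpoint[OF \<open>S \<noteq> {}\<close> common] by blast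
    then show ?thesis
      using card_insert by simp
  qed
qed

end

lemma card_setsq_ge_if_distinct_fixpoints:
  assumes "finite S" "\<And>p. p \<in> S \<Longrightarrow> 1 \<le> fst p" "inj_on fst S"
    and "g \<in> S" "h \<in> S" "bs_fixpoint g \<noteq> bs_fixpoint h"
  shows "4 * card S - 4 \<le> card (setsq S)"
  using assms
proof (induction S arbitrary: g h rule: finite_ranking_induct[where f = fst])
  case empty
  then show ?case by simp
next
  case (insert u S)
  show ?case
  proof (cases "u \<in> S")
    case True
    then show ?thesis
      using insert by (simp add: insert_absorb)
  next
    case False
    have "fst p < fst u" if "p \<in> S" for p
      using insert.hyps(2)[OF that] inj_onD[OF insert.prems(2), of p u] that False
      by (metis insertCI order_less_le)
    moreover have "1 \<le> fst u" "\<And>p. p \<in> S \<Longrightarrow> 1 \<le> fst p" "inj_on fst S"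
      using insert.prems(1,2) by auto
    ultimately show ?thesis
      using card_setsq_insert_top_ge[OF insert.hyps(1)] insert.IH insert.prems(3-5) by blast
  qed
qed

lemma inj_on_fst_bs_elem_image:
  assumes "inj_on m A"
  shows "inj_on fst ((\<lambda>i. bs_elem (int (m i)) (x i)) ` A)"
proof (rule inj_on_imageI)
  have "inj_on (int \<circ> m) A"
    using assms inj_on_subset[OF inj_of_nat subset_UNIV] by (rule comp_inj_on)
  moreover have "fst \<circ> (\<lambda>i. bs_elem (int (m i)) (x i)) = int \<circ> m"
    by (auto simp: bs_elem_def)
  ultimately show "inj_on (fst \<circ> (\<lambda>i. bs_elem (int (m i)) (x i))) A"
    by simp
qed

theorem lemma2p4:
  fixes t :: nat and m :: "nat \<Rightarrow> nat" and x :: "nat \<Rightarrow> int" and S :: "(int \<times> rat) set"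
  assumes "t \<ge> 2"
    and "m 1 \<ge> 1"
    and "\<And>i j. 1 \<le> i \<Longrightarrow> i < j \<Longrightarrow> j \<le> t \<Longrightarrow> m i < m j"
    and "S = (\<lambda>i. bs_elem (int (m i)) (x i)) ` {1..t}"
    and "non_abelian S"
  shows "card (setsq S) \<ge> 4 * card S - 4"
proof -
  have "1 \<le> m i" if "i \<in> {1..t}" for i
    using assms(2) assms(3)[of 1 i] that by (cases "i = 1") auto
  then have elems: "\<And>s. s \<in> S \<Longrightarrow> \<exists>n x. 1 \<le> n \<and> s = bs_elem (int n) x"
    using assms(4) by blast
  then have levels_pos: "\<And>s. s \<in> S \<Longrightarrow> 1 \<le> fst s"
    unfolding bs_elem_def by force
  have "strict_mono_on {1..t} m"
    by (intro strict_mono_onI assms(3)) auto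
  then have "inj_on fst S"
    unfolding assms(4) by (intro inj_on_fst_bs_elem_image strict_mono_on_imp_inj_on)
  obtain g h where "g \<in> S" "h \<in> S" "bs_fixpoint g \<noteq> bs_fixpoint h"
    using non_abelian_obtains_distinct_fixpoints[OF elems assms(5)] by blast
  then show ?thesis
    using card_setsq_ge_if_distinct_fixpoints[OF _ levels_pos \<open>inj_on fst S\<close>] assms(4) by simp
qed

end
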